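(* Let $\mathbb{F}_3$ be the free group on $a,b,c$, let $r = aba^{-1}b^{-1}c$ and $N$ its normal closure. Let $R = \{r_1^{\pm1},\dots,r_5^{\pm1}\}$ where $r_1 = aba^{-1}b^{-1}c$, $r_2 = ba^{-1}b^{-1}ca$, $r_3 = a^{-1}b^{-1}cab$, $r_4 = b^{-1}caba^{-1}$, $r_5 = caba^{-1}b^{-1}$. A piece is an initial subword of some element of $R$. Then every nontrivial cyclically reduced word $w \in N$ contains (as a subword) a piece of length $4$. *)

theory Defs
  imports Main "HOL-Library.Sublist"
begin

text \<open>Words over the generators a, b, c of the free group F_3 and their inverses.
  A letter is a pair (generator, sign); sign True means the generator itself,
  False its inverse.\<close>

datatype gen = GA | GB | GC

type_synonym letter = "gen \<times> bool"
type_synonym word = "letter list"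

definition inv_letter :: "letter \<Rightarrow> letter" where
  "inv_letter x = (fst x, \<not> snd x)"

definition inv_word :: "word \<Rightarrow> word" where
  "inv_word w = rev (map inv_letter w)"

definition a :: letter where "a = (GA, True)"
definition b :: letter where "b = (GB, True)"
definition c :: letter where "c = (GC, True)"
definition a' :: letter where "a' = (GA, False)"
definition b' :: letter where "b' = (GB, False)"

inductive reduce1 :: "word \<Rightarrow> word \<Rightarrow> bool" where
  "reduce1 (xs @ [x, inv_letter x] @ ys) (xs @ ys)"

definition free_eq :: "word \<Rightarrow> word \<Rightarrow> bool" where
  "free_eq = (sup reduce1 (reduce1\<inverse>\<inverse>))\<^sup>*\<^sup>*"

definition reduced :: "word \<Rightarrow> bool" where
  "reduced w \<longleftrightarrow> (\<forall>i. Suc i < length w \<longrightarrow> w ! Suc i \<noteq> inv_letter (w ! i))"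

definition cyclically_reduced :: "word \<Rightarrow> bool" where
  "cyclically_reduced w \<longleftrightarrow> reduced w \<and> (w \<noteq> [] \<longrightarrow> last w \<noteq> inv_letter (hd w))"

definition rel :: word where "rel = [a, b, a', b', c]"

inductive_set conj_prods :: "word set" where
  nil: "[] \<in> conj_prods"
| pos: "u \<in> conj_prods \<Longrightarrow> u @ g @ rel @ inv_word g \<in> conj_prods"
| neg: "u \<in> conj_prods \<Longrightarrow> u @ g @ inv_word rel @ inv_word g \<in> conj_prods"

definition in_N :: "word \<Rightarrow> bool" where
  "in_N w \<longleftrightarrow> (\<exists>u \<in> conj_prods. free_eq w u)"

definition r1 :: word where "r1 = [a, b, a', b', c]"
definition r2 :: word where "r2 = [b, a', b', c, a]"
definition r3 :: word where "r3 = [a', b', c, a, b]"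
definition r4 :: word where "r4 = [b', c, a, b, a']"
definition r5 :: word where "r5 = [c, a, b, a', b']"

definition R :: "word set" where
  "R = {r1, r2, r3, r4, r5} \<union> inv_word ` {r1, r2, r3, r4, r5}"

definition piece :: "word \<Rightarrow> bool" where
  "piece p \<longleftrightarrow> (\<exists>s \<in> R. prefix p s)"

end

theory Submission
  imports Defs
begin

(* The substitution c \<mapsto> b a b\<inverse> a\<inverse> sends the relator a b a\<inverse> b\<inverse> c to a freely trivial
   word, so the free reduction of the image of every w \<in> N is empty.  It therefore suffices
   to show that the reduced image of a nonempty reduced word w without pieces of length 4 is
   nonempty.  Reading w from the right, the reduced image of any such word beginning with
   x y z has the form f @ s, where the frontier (f, H) depends only on x y z and s is empty
   or begins with a letter of H.  A table of frontiers for all three-letter contexts, closed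
   under prepending a letter and with every f nonempty, is computed and checked by
   evaluation. *)

section \<open>Free reduction\<close>

fun cancel :: "letter \<Rightarrow> word \<Rightarrow> word" where
  "cancel x [] = [x]"
| "cancel x (y # ys) = (if y = inv_letter x then ys else x # y # ys)"

definition red :: "word \<Rightarrow> word" where
  "red w = foldr cancel w []"

lemma inv_letter_inv_letter [simp]: "inv_letter (inv_letter x) = x"
  by (simp add: inv_letter_def)

lemma reduced_iff_successively: "reduced w \<longleftrightarrow> successively (\<lambda>x y. y \<noteq> inv_letter x) w"
  by (simp add: reduced_def successively_conv_nth)

lemma reduced_Nil [simp]: "reduced []"
  by (simp add: reduced_iff_successively)

lemma reduced_Cons: "reduced (x # w) \<longleftrightarrow> reduced w \<and> (w = [] \<or> hd w \<noteq> inv_letter x)"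
  by (auto simp: reduced_iff_successively successively_Cons)

lemma reduced_append:
  "reduced (u @ v) \<longleftrightarrow> reduced u \<and> reduced v \<and> (u = [] \<or> v = [] \<or> hd v \<noteq> inv_letter (last u))"
  by (simp add: reduced_iff_successively successively_append_iff)

lemma reduced_cancel: "reduced w \<Longrightarrow> reduced (cancel x w)"
  by (cases w) (auto simp: reduced_Cons)

lemma reduced_foldr_cancel: "reduced w \<Longrightarrow> reduced (foldr cancel u w)"
  by (induction u) (simp_all add: reduced_cancel)

lemma reduced_red: "reduced (red w)"
  unfolding red_def by (simp add: reduced_foldr_cancel)

lemma cancel_eq_Cons: "w = [] \<or> hd w \<noteq> inv_letter x \<Longrightarrow> cancel x w = x # w"
  by (cases w) auto

lemma red_Nil [simp]: "red [] = []"
  by (simp add: red_def)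

lemma red_Cons: "red (x # w) = cancel x (red w)"
  by (simp add: red_def)

lemma red_append: "red (u @ v) = foldr cancel u (red v)"
  by (simp add: red_def)

lemma red_reduced: "reduced w \<Longrightarrow> red w = w"
  by (induction w) (simp_all add: red_Cons reduced_Cons cancel_eq_Cons)

lemma cancel_cancel_inv: "reduced w \<Longrightarrow> cancel x (cancel (inv_letter x) w) = w"
  by (cases w) (auto simp: reduced_Cons cancel_eq_Cons)

lemma red_append_red_right: "red (u @ red v) = red (u @ v)"
  by (simp add: red_append red_reduced reduced_red)

lemma red_append_red_left: "red (red u @ v) = red (u @ v)"
proof (induction u)
  case (Cons x u)
  have "red (red (x # u) @ v) = red (cancel x (red u) @ v)"
    by (simp add: red_Cons)
  also have "\<dots> = cancel x (red (red u @ v))"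
  proof (cases "red u")
    case (Cons y ys)
    show ?thesis
    proof (cases "y = inv_letter x")
      case True
      have "reduced (red (ys @ v))" by (rule reduced_red)
      then show ?thesis
        using Cons True by (simp add: red_Cons cancel_cancel_inv)
    qed (simp add: Cons red_Cons)
  qed (simp add: red_Cons)
  also have "\<dots> = red ((x # u) @ v)"
    by (simp add: Cons.IH red_Cons)
  finally show ?case .
qed simp

lemma inv_word_Nil [simp]: "inv_word [] = []"
  by (simp add: inv_word_def)

lemma inv_word_Cons [simp]: "inv_word (x # w) = inv_word w @ [inv_letter x]"
  by (simp add: inv_word_def)

lemma inv_word_append [simp]: "inv_word (u @ v) = inv_word v @ inv_word u"
  by (simp add: inv_word_def)

lemma inv_word_inv_word [simp]: "inv_word (inv_word w) = w"
  by (induction w) simp_all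

lemma red_cancel_inverse: "red (u @ g @ inv_word g @ v) = red (u @ v)"
proof -
  have "red (g @ inv_word g @ v) = red v" for v
  proof (induction g arbitrary: v)
    case (Cons x g)
    have "red ((x # g) @ inv_word (x # g) @ v) = cancel x (red (inv_letter x # v))"
      using Cons.IH[of "inv_letter x # v"] by (simp add: red_Cons)
    also have "\<dots> = red v"
      by (simp add: red_Cons cancel_cancel_inv reduced_red)
    finally show ?case .
  qed simp
  then show ?thesis
    by (simp add: red_append)
qed

section \<open>Killing the relator\<close>

definition proj_letter :: "letter \<Rightarrow> word" where
  "proj_letter x =
     (if x = c then [b, a, b', a'] else if x = inv_letter c then [a, b, a', b'] else [x])"

definition proj :: "word \<Rightarrow> word" where
  "proj w = concat (map proj_letter w)"

lemma proj_Nil [simp]: "proj [] = []"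
  and proj_Cons [simp]: "proj (x # w) = proj_letter x @ proj w"
  and proj_append [simp]: "proj (u @ v) = proj u @ proj v"
  by (simp_all add: proj_def)

lemma proj_letter_inv: "proj_letter (inv_letter x) = inv_word (proj_letter x)"
  by (cases x)
    (auto simp: proj_letter_def inv_letter_def inv_word_def a_def b_def c_def a'_def b'_def)

lemma proj_inv_word: "proj (inv_word w) = inv_word (proj w)"
  by (induction w) (simp_all add: proj_letter_inv)

lemma red_proj_reduce1: "reduce1 u v \<Longrightarrow> red (proj u) = red (proj v)"
  by (induction rule: reduce1.induct) (simp add: proj_letter_inv red_cancel_inverse)

lemma red_proj_free_eq: "free_eq u v \<Longrightarrow> red (proj u) = red (proj v)"
  unfolding free_eq_def
  by (induction rule: rtranclp_induct) (auto dest: red_proj_reduce1)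

lemma proj_rel: "proj rel = [a, b, a', b'] @ inv_word [a, b, a', b']"
  by (simp add: rel_def proj_letter_def a_def b_def c_def a'_def b'_def inv_letter_def)

lemma inv_word_proj_rel: "inv_word (proj rel) = proj rel"
  by (simp only: proj_rel inv_word_append inv_word_inv_word append_assoc)

lemma red_conj_proj_rel: "red (u @ h @ proj rel @ inv_word h) = red u"
proof -
  have "red (h @ proj rel @ inv_word h) = red (h @ inv_word h @ [])"
    using red_cancel_inverse[of h "[a, b, a', b']" "inv_word h"] by (simp add: proj_rel)
  also have "\<dots> = []"
    using red_cancel_inverse[of "[]" h "[]"] by simp
  finally show ?thesis
    using red_append[of u] red_append[of u "[]"] by simp
qed

lemma red_proj_conj_prods: "u \<in> conj_prods \<Longrightarrow> red (proj u) = []"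
  by (induction rule: conj_prods.induct)
    (simp_all add: proj_inv_word inv_word_proj_rel red_conj_proj_rel)

lemma red_proj_in_N: "in_N w \<Longrightarrow> red (proj w) = []"
  unfolding in_N_def using red_proj_free_eq red_proj_conj_prods by metis

section \<open>Piece-free words\<close>

definition letters :: "letter list" where
  "letters = [a, a', b, b', c, inv_letter c]"

lemma set_letters: "set letters = UNIV"
proof -
  have "x \<in> set letters" for x :: letter
    by (cases x; cases "fst x")
      (auto simp: letters_def a_def a'_def b_def b'_def c_def inv_letter_def)
  then show ?thesis by blast
qed

definition pieces4 :: "word list" where
  "pieces4 =
     [[a, b, a', b'], [b, a', b', c], [a', b', c, a], [b', c, a, b], [c, a, b, a'],
      [inv_letter c, b, a, b'], [a', inv_letter c, b, a], [b', a', inv_letter c, b],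
      [a, b', a', inv_letter c], [b, a, b', a']]"

lemma piece_if_in_pieces4: "p \<in> set pieces4 \<Longrightarrow> piece p \<and> length p = 4"
  unfolding pieces4_def piece_def R_def r1_def r2_def r3_def r4_def r5_def
  by (auto simp: inv_word_def inv_letter_def a_def b_def c_def a'_def b'_def)

fun piece_free :: "word \<Rightarrow> bool" where
  "piece_free [] \<longleftrightarrow> True"
| "piece_free (x # w) \<longleftrightarrow>
     piece_free w \<and> (w = [] \<or> hd w \<noteq> inv_letter x) \<and> take 4 (x # w) \<notin> set pieces4"

lemma piece_free_if_no_piece:
  assumes "reduced w" and "\<forall>p. piece p \<and> length p = 4 \<longrightarrow> \<not> sublist p w"
  shows "piece_free w"
  using assms
proof (induction w)
  case (Cons x w)
  have "sublist (take 4 (x # w)) (x # w)"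
    by (rule prefix_imp_sublist[OF take_is_prefix])
  with Cons.prems have "take 4 (x # w) \<notin> set pieces4"
    using piece_if_in_pieces4 by blast
  with Cons show ?case
    by (auto simp: reduced_Cons intro: sublist_Cons_right[THEN iffD2])
qed simp

lemma piece_free_take: "piece_free w \<Longrightarrow> piece_free (take n w)"
proof (induction w arbitrary: n)
  case (Cons x w)
  show ?case
  proof (cases n)
    case (Suc m)
    have "take 4 (x # take m w) \<notin> set pieces4"
    proof
      assume p: "take 4 (x # take m w) \<in> set pieces4"
      then have "take 4 (x # take m w) = take 4 (x # w)"
        using piece_if_in_pieces4[OF p] by (auto simp: min_def split: if_splits)
      with p Cons.prems show False by simp
    qed
    with Cons Suc show ?thesis
      by (auto simp: hd_take)
  qed simp
qed simp

lemma red_proj_short_nonempty: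
  assumes "piece_free w" "w \<noteq> []" "length w < 3"
  shows "red (proj w) \<noteq> []"
proof -
  have "\<forall>x \<in> set letters. \<forall>y \<in> set letters.
      red (proj [x]) \<noteq> [] \<and> (piece_free [x, y] \<longrightarrow> red (proj [x, y]) \<noteq> [])"
    by code_simp
  then have short: "red (proj [x]) \<noteq> []" "piece_free [x, y] \<Longrightarrow> red (proj [x, y]) \<noteq> []"
    for x y
    unfolding set_letters by blast+
  from assms(2,3) consider x where "w = [x]" | x y where "w = [x, y]"
    by (auto simp: numeral_eq_Suc length_Suc_conv less_Suc_eq)
  then show ?thesis
    by cases (use assms(1) short in auto)
qed

section \<open>Frontiers\<close>

type_synonym frontier = "word \<times> letter list"

definition admits :: "frontier \<Rightarrow> word \<Rightarrow> bool" where
  "admits fr w \<longleftrightarrow> (\<exists>s. w = fst fr @ s \<and> (s = [] \<or> hd s \<in> set (snd fr)))"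

definition subsumes :: "frontier \<Rightarrow> frontier \<Rightarrow> bool" where
  "subsumes fr fr' \<longleftrightarrow> prefix (fst fr) (fst fr') \<and>
     (if length (fst fr') = length (fst fr) then set (snd fr') \<subseteq> set (snd fr)
      else fst fr' ! length (fst fr) \<in> set (snd fr))"

lemma admits_subsumes:
  assumes "admits fr' w" and "subsumes fr fr'"
  shows "admits fr w"
proof -
  obtain s where w: "w = fst fr' @ s" and s: "s = [] \<or> hd s \<in> set (snd fr')"
    using assms(1) by (auto simp: admits_def)
  obtain q where q: "fst fr' = fst fr @ q"
    using assms(2) by (auto simp: subsumes_def prefix_def)
  have "q @ s = [] \<or> hd (q @ s) \<in> set (snd fr)"
    using assms(2) s by (cases q) (auto simp: subsumes_def q)
  with w q show ?thesis
    by (auto simp: admits_def)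
qed

lemma admits_red_prepend:
  assumes "admits (f, H) w" and "reduced w"
    and "\<forall>h \<in> set H. last (red (p @ f)) \<noteq> inv_letter h"
  shows "admits (red (p @ f), H) (red (p @ w))"
proof -
  obtain s where w: "w = f @ s" and s: "s = [] \<or> hd s \<in> set H"
    using assms(1) by (auto simp: admits_def)
  have "reduced (red (p @ f) @ s)"
    using assms(2,3) s reduced_red[of "p @ f"]
    by (auto simp: w reduced_append)
  then have "red (p @ w) = red (p @ f) @ s"
    using red_append_red_left[of "p @ f" s] by (simp add: w red_reduced)
  with s show ?thesis
    by (auto simp: admits_def)
qed

definition context_closed ::
    "letter \<Rightarrow> letter \<Rightarrow> letter \<Rightarrow> frontier \<Rightarrow> (letter \<times> frontier) list \<Rightarrow> bool" where
  "context_closed x y z fr row \<longleftrightarrow> piece_free [x, y, z] \<longrightarrow>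
     fst fr \<noteq> [] \<and> subsumes fr (red (proj [x, y, z]), []) \<and>
     (\<forall>(t, f, H) \<in> set row. piece_free [x, y, z, t] \<longrightarrow>
        (\<forall>h \<in> set H. last (red (proj_letter x @ f)) \<noteq> inv_letter h) \<and>
        subsumes fr (red (proj_letter x @ f), H))"

definition frontier_closed :: "(letter \<Rightarrow> letter \<Rightarrow> letter \<Rightarrow> frontier) \<Rightarrow> bool" where
  "frontier_closed F \<longleftrightarrow> (\<forall>x y z. context_closed x y z (F x y z) [(t, F y z t). t \<leftarrow> letters])"

lemma frontier_closedD:
  assumes "frontier_closed F"
  shows frontier_closed_base: "piece_free [x, y, z] \<Longrightarrow>
      fst (F x y z) \<noteq> [] \<and> subsumes (F x y z) (red (proj [x, y, z]), [])"
    and frontier_closed_step: "piece_free [x, y, z, t] \<Longrightarrow> F y z t = (f, H) \<Longrightarrow>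
      (\<forall>h \<in> set H. last (red (proj_letter x @ f)) \<noteq> inv_letter h) \<and>
      subsumes (F x y z) (red (proj_letter x @ f), H)"
proof -
  have closed: "context_closed x y z (F x y z) [(t, F y z t). t \<leftarrow> letters]"
    using assms unfolding frontier_closed_def by blast
  then show "piece_free [x, y, z] \<Longrightarrow>
      fst (F x y z) \<noteq> [] \<and> subsumes (F x y z) (red (proj [x, y, z]), [])"
    unfolding context_closed_def by blast
  assume "piece_free [x, y, z, t]" and "F y z t = (f, H)"
  moreover have "piece_free [x, y, z]"
    using piece_free_take[OF \<open>piece_free [x, y, z, t]\<close>, of 3] by (simp add: numeral_eq_Suc)
  ultimately show "(\<forall>h \<in> set H. last (red (proj_letter x @ f)) \<noteq> inv_letter h) \<and>
      subsumes (F x y z) (red (proj_letter x @ f), H)"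
    using closed set_letters unfolding context_closed_def by fastforce
qed

lemma admits_frontier:
  assumes "frontier_closed F" and "piece_free (x # y # z # w)"
  shows "admits (F x y z) (red (proj (x # y # z # w)))"
  using assms(2)
proof (induction w arbitrary: x y z)
  case Nil
  then have "subsumes (F x y z) (red (proj [x, y, z]), [])"
    using frontier_closed_base[OF assms(1)] by blast
  then show ?case
    by (rule admits_subsumes[rotated]) (simp add: admits_def)
next
  case (Cons t w)
  obtain f H where fH: "F y z t = (f, H)"
    by fastforce
  have "piece_free (take 4 (x # y # z # t # w))"
    using Cons.prems by (rule piece_free_take)
  then have "piece_free [x, y, z, t]"
    by (simp add: numeral_eq_Suc)
  note step = frontier_closed_step[OF assms(1) this fH]
  have "piece_free (y # z # t # w)"
    using Cons.prems by simp
  then have "admits (f, H) (red (proj (y # z # t # w)))"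
    using Cons.IH fH by metis
  then have "admits (red (proj_letter x @ f), H) (red (proj_letter x @ red (proj (y # z # t # w))))"
    using reduced_red step by (blast intro: admits_red_prepend)
  then have "admits (red (proj_letter x @ f), H) (red (proj (x # y # z # t # w)))"
    by (simp add: red_append_red_right)
  with step show ?case
    using admits_subsumes by blast
qed

lemma red_proj_nonempty:
  assumes "frontier_closed F" and "piece_free w" and "w \<noteq> []"
  shows "red (proj w) \<noteq> []"
proof (cases "length w < 3")
  case False
  then obtain x y z v where w: "w = x # y # z # v"
    by (auto simp: numeral_eq_Suc Suc_le_length_iff not_less)
  have "piece_free (take 3 w)"
    using assms(2) by (rule piece_free_take)
  with w have "fst (F x y z) \<noteq> []"
    using frontier_closed_base[OF assms(1)] by (simp add: numeral_eq_Suc)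
  with admits_frontier[OF assms(1) assms(2)[unfolded w]] show ?thesis
    by (auto simp: admits_def w)
qed (use assms red_proj_short_nonempty in auto)

section \<open>A closed frontier\<close>

definition lub_frontier :: "frontier list \<Rightarrow> frontier" where
  "lub_frontier frs =
     (let f = foldr longest_common_prefix (map fst frs) (fst (hd frs)) in
      (f, remdups ([r ! length f. (r, _) \<leftarrow> frs, length f < length r] @
                   concat [H. (r, H) \<leftarrow> frs, r = f])))"

definition extend_frontier ::
    "letter \<Rightarrow> letter \<Rightarrow> letter \<Rightarrow> (letter \<times> frontier) list \<Rightarrow> frontier" where
  "extend_frontier x y z row =
     (if piece_free [x, y, z]
      then lub_frontier ((red (proj [x, y, z]), []) #
        [(red (proj_letter x @ f), H). (t, f, H) \<leftarrow> row, piece_free [x, y, z, t]])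
      else ([], []))"

(* For piece-free x y z, frontier k x y z is the most precise frontier admitting the reduced
   images of all piece-free words x y z v with length v \<le> k. *)
fun frontier :: "nat \<Rightarrow> letter \<Rightarrow> letter \<Rightarrow> letter \<Rightarrow> frontier" where
  "frontier 0 x y z = (red (proj [x, y, z]), [])"
| "frontier (Suc k) x y z = extend_frontier x y z [(t, frontier k y z t). t \<leftarrow> letters]"

(* Tables carry the same values as frontier k; evaluating refine_table reuses the previous
   round, whereas unfolding frontier k directly would recompute it exponentially often. *)
type_synonym frontier_table = "(letter \<times> (letter \<times> (letter \<times> frontier) list) list) list"

definition tabulate :: "(letter \<Rightarrow> letter \<Rightarrow> letter \<Rightarrow> frontier) \<Rightarrow> frontier_table" where
  "tabulate F = [(x, [(y, [(z, F x y z). z \<leftarrow> letters]). y \<leftarrow> letters]). x \<leftarrow> letters]"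

definition refine_table :: "frontier_table \<Rightarrow> frontier_table" where
  "refine_table tab =
     [(x, [(y, [(z, extend_frontier x y z row). (z, row) \<leftarrow> row_y]). (y, row_y) \<leftarrow> tab]).
      x \<leftarrow> letters]"

lemma refine_table_tabulate: "refine_table (tabulate (frontier k)) = tabulate (frontier (Suc k))"
  by (simp add: refine_table_def tabulate_def comp_def)

definition table_closed :: "frontier_table \<Rightarrow> bool" where
  "table_closed tab \<longleftrightarrow>
     (\<forall>(x, row_x) \<in> set tab. \<forall>((y, row_xy), (_, row_y)) \<in> set (zip row_x tab).
        \<forall>((z, fr), (_, row_yz)) \<in> set (zip row_xy row_y). context_closed x y z fr row_yz)"

lemma frontier_closed_if_table_closed: "table_closed (tabulate F) \<Longrightarrow> frontier_closed F"
  by (auto simp: table_closed_def tabulate_def frontier_closed_def zip_map_map zip_same_conv_map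
      set_letters)

lemma frontier_closed_4: "frontier_closed (frontier 4)"
proof -
  have "table_closed (refine_table (refine_table (refine_table (refine_table
      (tabulate (frontier 0))))))"
    by code_simp
  then show ?thesis
    by (simp add: refine_table_tabulate numeral_eq_Suc frontier_closed_if_table_closed)
qed

theorem theorem3p1:
  fixes w :: word
  assumes "w \<noteq> []" and "cyclically_reduced w" and "in_N w"
  shows "\<exists>p. piece p \<and> length p = 4 \<and> sublist p w"
proof (rule ccontr)
  assume no_piece: "\<nexists>p. piece p \<and> length p = 4 \<and> sublist p w"
  have "reduced w"
    using assms(2) by (simp add: cyclically_reduced_def)
  with no_piece have "piece_free w"
    by (blast intro: piece_free_if_no_piece)
  with frontier_closed_4 have "red (proj w) \<noteq> []"
    using assms(1) by (rule red_proj_nonempty)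
  with red_proj_in_N[OF assms(3)] show False
    by contradiction
qed

end
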